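(* Let $\varphi\in\Phi$ be such that $\mathscr{L}_{\varphi}\neq\emptyset$. Then $\mathscr{L}_{\varphi}$ is uncountable. Moreover, for every non-empty open interval $J\subseteq\mathbb{R}$, the set $\mathscr{L}_{\varphi}^{\ast}\cap J$ is uncountable.
   Context: $\mathscr{L}$ is the set of Liouville numbers (real irrational $\zeta$ such that for every $\eta>0$ there are infinitely many rationals $y/x$, $x\geq1$, with $|\zeta-y/x|\leq x^{-\eta}$). For real $\alpha$, $\Vert\alpha\Vert$ is the distance from $\alpha$ to the nearest integer. $\Phi$ is the set of all non-decreasing functions $\varphi:\mathbb{R}_{\geq 2}\to\mathbb{R}_{\geq 2}$ with $\lim_{x\to\infty}\varphi(x)=\infty$. For $\varphi\in\Phi$, $\mathscr{L}_{\varphi}$ is the set of $\zeta\in\mathscr{L}$ such that for every positive integer $N$ there is an integer $q$ with $2\leq q\leq\varphi(N)$ and $-\log\Vert\zeta q\Vert/\log q\geq N$; $\mathscr{L}_{\varphi}^{\ast}\supseteq\mathscr{L}_{\varphi}$ is the set of $\zeta\in\mathscr{L}$ for which this condition holds for all $N\geq N_0(\zeta)$ (some $N_0$ depending on $\zeta$). *)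

theory Defs
  imports "HOL-Analysis.Analysis"
begin

definition dnint :: "real \<Rightarrow> real" where
  "dnint a = \<bar>a - of_int (round a)\<bar>"

definition Liouville_set :: "real set" where
  "Liouville_set = {\<zeta>::real. \<zeta> \<notin> \<rat> \<and>
     (\<forall>\<eta>>0. infinite {real_of_int y / real_of_int x | (y::int) (x::int).
         x \<ge> 1 \<and> \<bar>\<zeta> - real_of_int y / real_of_int x\<bar> \<le> (real_of_int x) powr (-\<eta>)})}"

definition PhiClass :: "(real \<Rightarrow> real) set" where
  "PhiClass = {\<phi>. (\<forall>x\<ge>2. \<phi> x \<ge> 2) \<and> mono_on {2..} \<phi> \<and> filterlim \<phi> at_top at_top}"

definition good_at :: "(real \<Rightarrow> real) \<Rightarrow> real \<Rightarrow> nat \<Rightarrow> bool" where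
  "good_at \<phi> \<zeta> N \<longleftrightarrow> (\<exists>q::int. 2 \<le> q \<and> real_of_int q \<le> \<phi> (real N) \<and>
       - ln (dnint (\<zeta> * of_int q)) / ln (of_int q) \<ge> real N)"

definition L_phi :: "(real \<Rightarrow> real) \<Rightarrow> real set" where
  "L_phi \<phi> = {\<zeta> \<in> Liouville_set. \<forall>N\<ge>1. good_at \<phi> \<zeta> N}"

definition L_phi_star :: "(real \<Rightarrow> real) \<Rightarrow> real set" where
  "L_phi_star \<phi> = {\<zeta> \<in> Liouville_set. \<exists>N0. \<forall>N\<ge>N0. good_at \<phi> \<zeta> N}"

end

theory Submission
  imports Defs
begin

text \<open>
  Fix \<open>\<zeta> \<in> L\<^sub>\<phi>\<close> and let \<open>D(N)\<close> be the least \<open>q \<ge> 2\<close> with \<open>\<parallel>\<zeta> q\<parallel> \<le> q\<^sup>-\<^sup>N\<close>; then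
  \<open>D(N) \<le> \<phi>(N)\<close>, and whenever \<open>D(N) < D(N+1)\<close> the two best approximations
  differ by a nonzero integer determinant, which forces \<open>D(N+1) \<ge> (2/3) D(N)\<^sup>N\<close>.
  As \<open>D\<close> is unbounded, \<open>\<phi>\<close> exceeds \<open>2b\<^sup>L + 2b\<close> at \<open>L + 1\<close> for infinitely many \<open>L\<close>, for every \<open>b\<close>.

  This room is used to grow a binary tree of rationals \<open>a\<^sub>k/b\<^sub>k\<close> with
  \<open>a\<^sub>k\<^sub>+\<^sub>1 b\<^sub>k - a\<^sub>k b\<^sub>k\<^sub>+\<^sub>1 = 1\<close> and \<open>b\<^sub>k\<^sub>+\<^sub>1 \<approx> 2 b\<^sub>k\<^sup>L\<close> in each step, the two children of a
  node having denominators \<open>b'\<close> and \<open>b' + b\<^sub>k\<close>. Along every branch the limit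
  \<open>x\<close> satisfies \<open>\<parallel>x b\<^sub>k\<parallel> \<le> b\<^sub>k\<^sup>-\<^sup>N\<close> and \<open>b\<^sub>k \<le> \<phi>(N)\<close> for every level \<open>N\<close> between the
  exponents used at \<open>b\<^sub>k\<close> and at \<open>b\<^sub>k\<^sub>+\<^sub>1\<close>, so \<open>x \<in> L\<^sub>\<phi>\<^sup>*\<close>, and
  different branches have different limits. Starting the tree at a rational
  inside \<open>J\<close> (or at \<open>1/2\<close> with level 1 for \<open>L\<^sub>\<phi>\<close> itself) gives continuum many elements.
\<close>

section \<open>Distance to the nearest integer and a criterion for Liouville numbers\<close>

lemma dnint_le: "dnint y \<le> \<bar>y - of_int k\<bar>"
  unfolding dnint_def by (rule round_diff_minimal)

lemma dnint_nonneg: "0 \<le> dnint y"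
  unfolding dnint_def by simp

lemma dnint_pos_iff: "0 < dnint y \<longleftrightarrow> y \<notin> \<int>"
proof -
  have "dnint y = 0 \<longleftrightarrow> y \<in> \<int>"
    unfolding dnint_def by (metis Ints_cases Ints_of_int eq_iff_diff_eq_0 abs_0 abs_eq_0 round_of_int)
  then show ?thesis
    using dnint_nonneg[of y] by linarith
qed

definition good_denom :: "real \<Rightarrow> nat \<Rightarrow> int \<Rightarrow> bool" where
  "good_denom x N q \<longleftrightarrow> 2 \<le> q \<and> 0 < dnint (x * of_int q) \<and> dnint (x * of_int q) \<le> 1 / of_int q ^ N"

text \<open>The hypothesis \<open>N \<ge> 1\<close> matters: \<open>ln 0 = 0\<close> in Isabelle, so \<open>d = 0\<close> is excluded only because \<open>N > 0\<close>.\<close>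
lemma le_neg_ln_div_ln_iff:
  fixes q d :: real
  assumes "N \<ge> 1" "1 < q" "0 \<le> d"
  shows "real N \<le> - ln d / ln q \<longleftrightarrow> 0 < d \<and> d \<le> 1 / q ^ N"
proof -
  have lq: "0 < ln q"
    using assms(2) by simp
  have "real N \<le> - ln d / ln q \<longleftrightarrow> real N * ln q \<le> - ln d"
    using lq by (metis minus_divide_left pos_le_divide_eq)
  also have "\<dots> \<longleftrightarrow> 0 < d \<and> d \<le> 1 / q ^ N"
  proof (cases "d = 0")
    case True
    have "0 < real N * ln q"
      using lq assms(1) by simp
    then show ?thesis
      using True by simp
  next
    case False
    then have dp: "0 < d"
      using assms(3) by simp
    have "ln (1 / q ^ N) = - (real N * ln q)"
      using assms(2) by (simp add: ln_div ln_realpow)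
    moreover have "d \<le> 1 / q ^ N \<longleftrightarrow> ln d \<le> ln (1 / q ^ N)"
      using dp assms(2) by simp
    ultimately show ?thesis
      using dp by linarith
  qed
  finally show ?thesis .
qed

lemma good_at_iff_good_denom:
  assumes "N \<ge> 1"
  shows "good_at \<phi> x N \<longleftrightarrow> (\<exists>q. good_denom x N q \<and> real_of_int q \<le> \<phi> (real N))"
  unfolding good_at_def good_denom_def
  using le_neg_ln_div_ln_iff[OF assms _ dnint_nonneg] by force

lemma dnint_rat_ge:
  assumes "b > 0" "0 < dnint (of_int a / of_int b * of_int q)"
  shows "1 / of_int b \<le> dnint (of_int a / of_int b * of_int q)"
proof -
  define m where "m = round (of_int a / of_int b * of_int q :: real)"
  have bp: "(0::real) < of_int b"
    using assms by simp
  have e: "dnint (of_int a / of_int b * of_int q) = \<bar>of_int (a*q - m*b)\<bar> / of_int b"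
    unfolding dnint_def m_def[symmetric] using bp by (simp add: field_simps)
  have "a*q - m*b \<noteq> 0"
  proof
    assume "a*q - m*b = 0"
    then show False
      using assms(2) e by simp
  qed
  then have "1 \<le> \<bar>real_of_int (a*q - m*b)\<bar>"
    by linarith
  then show ?thesis
    unfolding e using bp by (simp add: divide_right_mono)
qed

lemma good_denoms_imp_not_Rats:
  assumes good: "\<forall>N\<ge>N0. \<exists>q. good_denom x N q"
  shows "x \<notin> \<rat>"
proof
  assume "x \<in> \<rat>"
  then obtain a b :: int where b: "b > 0" and x: "x = of_int a / of_int b"
    by (metis Rats_cases')
  define N where "N = N0 + nat b"
  have "N0 \<le> N"
    unfolding N_def by simp
  then obtain q where q: "good_denom x N q"
    using good by blast
  then have q2: "2 \<le> q" and pos: "0 < dnint (x * of_int q)"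
    unfolding good_denom_def by auto
  have "1 / of_int b \<le> dnint (x * of_int q)"
    using dnint_rat_ge[of b a q] b pos x by simp
  also have "\<dots> \<le> 1 / of_int q ^ N"
    using q unfolding good_denom_def by simp
  also have "\<dots> \<le> 1 / 2 ^ N"
    using q2 by (simp add: frac_le power_mono)
  also have "\<dots> < 1 / of_int b"
  proof -
    have "real_of_int b \<le> real N"
      using N_def b by simp
    also have "\<dots> < 2 ^ N"
      by (rule of_nat_less_two_power)
    finally show ?thesis
      using b by (simp add: frac_less2)
  qed
  finally show False
    by simp
qed

lemma good_denom_dist:
  assumes "good_denom x N q"
  shows "\<bar>x - of_int (round (x * of_int q)) / of_int q\<bar> \<le> 1 / of_int q ^ Suc N"
proof -
  have q: "(0::real) < of_int q"
    using assms unfolding good_denom_def by simp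
  have "x - of_int (round (x * of_int q)) / of_int q = (x * of_int q - of_int (round (x * of_int q))) / of_int q"
    using q by (simp add: field_simps)
  then have "\<bar>x - of_int (round (x * of_int q)) / of_int q\<bar> = dnint (x * of_int q) / of_int q"
    unfolding dnint_def using q by (simp add: abs_divide)
  also have "\<dots> \<le> (1 / of_int q ^ N) / of_int q"
    using assms q unfolding good_denom_def by (intro divide_right_mono) auto
  also have "\<dots> = 1 / of_int q ^ Suc N"
    by simp
  finally show ?thesis .
qed

lemma good_denom_dist_le:
  assumes "good_denom x N q"
  defines "p \<equiv> round (x * of_int q)"
  shows "\<eta> \<le> real (Suc N) \<Longrightarrow> \<bar>x - of_int p / of_int q\<bar> \<le> of_int q powr (-\<eta>)"
    and "\<bar>x - of_int p / of_int q\<bar> \<le> (1/2) ^ Suc N"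
proof -
  have q2: "(2::real) \<le> of_int q"
    using assms(1) unfolding good_denom_def by simp
  have "1 / real_of_int q ^ Suc N = real_of_int q powr (- real (Suc N))"
    using q2 by (metis powr_minus_divide powr_realpow of_nat_Suc less_le_trans zero_less_numeral)
  then have dist: "\<bar>x - of_int p / of_int q\<bar> \<le> of_int q powr (- real (Suc N))"
    using good_denom_dist[OF assms(1)] unfolding p_def by simp
  then show "\<eta> \<le> real (Suc N) \<Longrightarrow> \<bar>x - of_int p / of_int q\<bar> \<le> of_int q powr (-\<eta>)"
    using q2 by (smt (verit) powr_mono)
  have "1 / real_of_int q ^ Suc N \<le> (1/2) ^ Suc N"
    using q2 by (simp add: power_one_over frac_le power_mono del: power_Suc)
  then show "\<bar>x - of_int p / of_int q\<bar> \<le> (1/2) ^ Suc N"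
    using good_denom_dist[OF assms(1)] unfolding p_def by linarith
qed

lemma Liouville_setI:
  assumes good: "\<forall>N\<ge>N0. \<exists>q. good_denom x N q"
  shows "x \<in> Liouville_set"
proof -
  have irr: "x \<notin> \<rat>"
    using good by (rule good_denoms_imp_not_Rats)
  have "infinite {real_of_int y / real_of_int z | (y::int) (z::int).
         z \<ge> 1 \<and> \<bar>x - real_of_int y / real_of_int z\<bar> \<le> (real_of_int z) powr (-\<eta>)}"
    (is "infinite ?S") for \<eta>
  proof -
    have "x islimpt ?S"
    proof (rule islimpt_approachable_real[THEN iffD2], intro allI impI)
      fix \<epsilon> :: real
      assume "\<epsilon> > 0"
      then obtain N1 where N1: "(1/2::real) ^ N1 < \<epsilon>"
        using real_arch_pow_inv[of \<epsilon> "1/2"] by auto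
      define N where "N = N0 + N1 + nat \<lceil>\<eta>\<rceil>"
      have "N0 \<le> N"
        unfolding N_def by simp
      then obtain q where q: "good_denom x N q"
        using good by blast
      define p where "p = round (x * of_int q)"
      have "\<eta> \<le> real (Suc N)"
        unfolding N_def by linarith
      then have "of_int p / of_int q \<in> ?S"
        using good_denom_dist_le(1)[OF q] q unfolding p_def good_denom_def by force
      moreover have "of_int p / of_int q \<noteq> x"
        using irr by (metis Rats_divide Rats_of_int)
      moreover have "(1/2::real) ^ Suc N \<le> (1/2) ^ N1"
        unfolding N_def by (intro power_decreasing) auto
      then have "\<bar>of_int p / of_int q - x\<bar> < \<epsilon>"
        using good_denom_dist_le(2)[OF q] N1 unfolding p_def by (simp add: abs_minus_commute)
      ultimately show "\<exists>y\<in>?S. y \<noteq> x \<and> \<bar>y - x\<bar> < \<epsilon>"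
        by blast
    qed
    then show ?thesis
      using islimpt_finite by blast
  qed
  then show ?thesis
    unfolding Liouville_set_def using irr by blast
qed

lemma in_L_phi_star_if_good_denoms:
  assumes "\<forall>N\<ge>n0. \<exists>q. good_denom y N q \<and> real_of_int q \<le> \<phi> (real N)"
  shows "y \<in> L_phi_star \<phi>"
proof -
  have "\<forall>N\<ge>Suc n0. good_at \<phi> y N"
    using assms good_at_iff_good_denom by simp
  moreover have "y \<in> Liouville_set"
    using assms by (intro Liouville_setI[of n0]) blast
  ultimately show ?thesis
    unfolding L_phi_star_def by blast
qed

lemma in_L_phi_if_good_denoms:
  assumes "\<forall>N\<ge>1. \<exists>q. good_denom y N q \<and> real_of_int q \<le> \<phi> (real N)"
  shows "y \<in> L_phi \<phi>"
  using assms good_at_iff_good_denom Liouville_setI[of 1 y] unfolding L_phi_def by blast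

section \<open>Least denominators of an element of \<open>L\<^sub>\<phi>\<close>\<close>

text \<open>
  With \<open>p = round (\<zeta> q)\<close>, \<open>p' = round (\<zeta> q')\<close> and signed errors \<open>e, e'\<close>, the integer
  \<open>p q' - p' q = e' q - e q'\<close> vanishes only if \<open>|e'| q = |e| q'\<close>.
\<close>
lemma dnint_cross_ge_1:
  fixes q q' :: nat
  assumes "dnint (\<zeta> * real q') * real q \<noteq> dnint (\<zeta> * real q) * real q'"
  shows "1 \<le> dnint (\<zeta> * real q') * real q + dnint (\<zeta> * real q) * real q'"
proof -
  define p where "p = round (\<zeta> * real q)"
  define p' where "p' = round (\<zeta> * real q')"
  define e where "e = \<zeta> * real q - of_int p"
  define e' where "e' = \<zeta> * real q' - of_int p'"
  have abs_e: "\<bar>e\<bar> = dnint (\<zeta> * real q)" "\<bar>e'\<bar> = dnint (\<zeta> * real q')"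
    unfolding e_def e'_def p_def p'_def dnint_def by simp_all
  have lin: "real_of_int (p * int q' - p' * int q) = e' * real q - e * real q'"
    unfolding e_def e'_def by (simp add: algebra_simps)
  have "p * int q' - p' * int q \<noteq> 0"
  proof
    assume "p * int q' - p' * int q = 0"
    then have "e' * real q = e * real q'"
      using lin by simp
    then have "\<bar>e'\<bar> * real q = \<bar>e\<bar> * real q'"
      by (metis abs_mult abs_of_nat)
    then show False
      using assms abs_e by simp
  qed
  then have "1 \<le> \<bar>real_of_int (p * int q' - p' * int q)\<bar>"
    by linarith
  also have "\<dots> \<le> \<bar>e'\<bar> * real q + \<bar>e\<bar> * real q'"
    unfolding lin by (simp add: abs_mult abs_triangle_ineq4[THEN order_trans])
  finally show ?thesis
    using abs_e by simp
qed

lemma denominator_jump: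
  fixes q q' :: nat
  assumes "N \<ge> 1" "2 \<le> q" "q < q'"
    and e_le: "dnint (\<zeta> * real q) \<le> 1 / real q ^ N"
    and e_gt: "1 / real q ^ Suc N < dnint (\<zeta> * real q)"
    and e'_le: "dnint (\<zeta> * real q') \<le> 1 / real q' ^ Suc N"
  shows "(2/3) * real q ^ N \<le> real q'"
proof -
  have Rq: "(2::real) \<le> real q" "real q < real q'"
    using assms(2,3) by auto
  have "1 / real q' ^ Suc N < 1 / real q ^ Suc N"
    using Rq by (intro divide_strict_left_mono power_strict_mono) auto
  then have "dnint (\<zeta> * real q') < dnint (\<zeta> * real q)"
    using e_gt e'_le by linarith
  moreover have "0 \<le> dnint (\<zeta> * real q')"
    by (rule dnint_nonneg)
  ultimately have "dnint (\<zeta> * real q') * real q < dnint (\<zeta> * real q) * real q'"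
    using Rq by (intro mult_strict_mono) simp_all
  then have "1 \<le> dnint (\<zeta> * real q') * real q + dnint (\<zeta> * real q) * real q'"
    by (intro dnint_cross_ge_1) simp
  also have "dnint (\<zeta> * real q') * real q \<le> 1/3"
  proof -
    have "dnint (\<zeta> * real q') * real q \<le> (1 / real q' ^ Suc N) * real q"
      using e'_le by (intro mult_right_mono) simp_all
    also have "\<dots> \<le> (1 / real q' ^ Suc N) * real q'"
      using Rq by (intro mult_left_mono) simp_all
    also have "\<dots> = 1 / real q' ^ N"
      using Rq by simp
    also have "\<dots> \<le> 1 / real q'"
      using Rq assms(1) by (intro divide_left_mono) (auto intro: order_trans[OF _ power_increasing[of 1 N]])
    also have "\<dots> \<le> 1/3"
      using Rq by simp
    finally show ?thesis .
  qed
  finally have "2/3 \<le> dnint (\<zeta> * real q) * real q'"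
    by simp
  also have "\<dots> \<le> real q' / real q ^ N"
    using e_le Rq by (simp add: mult_right_mono divide_simps)
  finally show ?thesis
    using Rq by (simp add: field_simps)
qed

lemma two_power_plus_le:
  fixes b :: int
  assumes "2 \<le> b" "4 \<le> L"
  shows "real_of_int (2*b^L + 2*b) \<le> (2/3) * real_of_int (2*b) ^ L"
proof -
  have "b \<le> b ^ L"
    using assms by (simp add: self_le_power)
  then have "real_of_int (2*b^L + 2*b) \<le> 4 * real_of_int b ^ L"
    by (simp add: of_int_le_iff[symmetric] del: of_int_le_iff)
  also have "\<dots> \<le> (2/3) * (2 ^ L * real_of_int b ^ L)"
  proof -
    have "(16::real) \<le> 2 ^ L"
      using power_increasing[of 4 L "2::real"] assms(2) by simp
    then show ?thesis
      using assms(1) by (simp add: mult_right_mono)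
  qed
  also have "\<dots> = (2/3) * real_of_int (2*b) ^ L"
    by (simp add: power_mult_distrib)
  finally show ?thesis .
qed

locale L_phi_witness =
  fixes \<zeta> :: real and \<phi> :: "real \<Rightarrow> real"
  assumes in_L_phi: "\<zeta> \<in> L_phi \<phi>"
begin

lemma irrational: "\<zeta> \<notin> \<rat>"
  using in_L_phi unfolding L_phi_def Liouville_set_def by blast

lemma good: "N \<ge> 1 \<Longrightarrow> good_at \<phi> \<zeta> N"
  using in_L_phi unfolding L_phi_def by blast

definition approx_denom :: "nat \<Rightarrow> nat \<Rightarrow> bool" where
  "approx_denom N q \<longleftrightarrow> 2 \<le> q \<and> dnint (\<zeta> * real q) \<le> 1 / real q ^ N"

definition least_denom :: "nat \<Rightarrow> nat" where
  "least_denom N = (LEAST q. approx_denom N q)"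

lemma approx_denom_le_phi:
  assumes "N \<ge> 1"
  obtains q where "approx_denom N q" "real q \<le> \<phi> (real N)"
proof -
  obtain q :: int where q: "good_denom \<zeta> N q" "real_of_int q \<le> \<phi> (real N)"
    using good[OF assms] good_at_iff_good_denom[OF assms] by blast
  then have "approx_denom N (nat q)" "real (nat q) \<le> \<phi> (real N)"
    unfolding good_denom_def approx_denom_def by auto
  then show ?thesis
    by (rule that)
qed

lemma phi_ge_two: "N \<ge> 1 \<Longrightarrow> 2 \<le> \<phi> (real N)"
  by (metis approx_denom_def approx_denom_le_phi of_nat_le_iff of_nat_numeral order_trans)

lemma approx_denom_least_denom: "N \<ge> 1 \<Longrightarrow> approx_denom N (least_denom N)"
  unfolding least_denom_def by (metis LeastI approx_denom_le_phi)

lemma least_denom_le_phi: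
  assumes "N \<ge> 1"
  shows "real (least_denom N) \<le> \<phi> (real N)"
proof -
  obtain q where "approx_denom N q" "real q \<le> \<phi> (real N)"
    using approx_denom_le_phi[OF assms] .
  moreover from this have "least_denom N \<le> q"
    unfolding least_denom_def by (simp add: Least_le)
  ultimately show ?thesis
    by linarith
qed

lemma dnint_pos:
  assumes "q \<noteq> 0"
  shows "0 < dnint (\<zeta> * real q)"
proof -
  have "\<zeta> * real q \<notin> \<int>"
  proof
    assume "\<zeta> * real q \<in> \<int>"
    then have "\<zeta> * real q / real q \<in> \<rat>"
      using Ints_subset_Rats by (intro Rats_divide) auto
    then show False
      using assms irrational by simp
  qed
  then show ?thesis
    using dnint_pos_iff by blast
qed

lemma least_denom_le_Suc:
  assumes "N \<ge> 1"
  shows "least_denom N \<le> least_denom (Suc N)"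
proof -
  have w: "approx_denom (Suc N) (least_denom (Suc N))"
    using approx_denom_least_denom by simp
  then have "2 \<le> least_denom (Suc N)"
    unfolding approx_denom_def by simp
  then have "1 / real (least_denom (Suc N)) ^ Suc N \<le> 1 / real (least_denom (Suc N)) ^ N"
    by (intro divide_left_mono power_increasing) auto
  then have "approx_denom N (least_denom (Suc N))"
    using w unfolding approx_denom_def by auto
  then show ?thesis
    unfolding least_denom_def by (simp add: Least_le)
qed

lemma least_denom_mono:
  assumes "N \<ge> 1" "N \<le> M"
  shows "least_denom N \<le> least_denom M"
  using assms(2)
proof (induction M rule: dec_induct)
  case (step m)
  then show ?case
    using least_denom_le_Suc[of m] assms(1) by simp
qed simp

lemma least_denom_unbounded: "\<exists>N\<ge>1. B < least_denom N"
proof (rule ccontr)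
  assume "\<not> ?thesis"
  then have bd: "\<forall>N\<ge>1. least_denom N \<le> B"
    by auto
  have "2 \<le> least_denom 1"
    using approx_denom_least_denom[of 1] unfolding approx_denom_def by simp
  then have B2: "2 \<le> B"
    using bd by fastforce
  define S where "S = (\<lambda>q. dnint (\<zeta> * real q)) ` {2..B}"
  have finS: "finite S" "S \<noteq> {}"
    using B2 S_def by auto
  have "0 < Min S"
    using finS dnint_pos S_def by (simp add: Min_gr_iff)
  then obtain N0 where N0: "(1/2::real) ^ N0 < Min S"
    using real_arch_pow_inv[of "Min S" "1/2"] by auto
  define N where "N = Suc N0"
  define q where "q = least_denom N"
  have w: "approx_denom N q"
    using approx_denom_least_denom N_def q_def by simp
  have q: "q \<in> {2..B}"
    using w bd N_def q_def unfolding approx_denom_def by auto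
  have "Min S \<le> dnint (\<zeta> * real q)"
    using finS q S_def by (simp add: Min_le)
  also have "\<dots> \<le> 1 / real q ^ N"
    using w unfolding approx_denom_def by simp
  also have "\<dots> \<le> (1/2) ^ N"
    using q by (simp add: power_one_over frac_le power_mono)
  also have "\<dots> \<le> (1/2) ^ N0"
    unfolding N_def by simp
  finally show False
    using N0 by simp
qed

lemma least_denom_jump:
  assumes "N \<ge> 1" and "least_denom N < least_denom (Suc N)"
  shows "(2/3) * real (least_denom N) ^ N \<le> real (least_denom (Suc N))"
proof (rule denominator_jump)
  have "approx_denom N (least_denom N)" "approx_denom (Suc N) (least_denom (Suc N))"
    using approx_denom_least_denom assms(1) by simp_all
  moreover have "\<not> approx_denom (Suc N) (least_denom N)"
    using assms(2) unfolding least_denom_def by (rule not_less_Least)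
  ultimately show "2 \<le> least_denom N"
    and "dnint (\<zeta> * real (least_denom N)) \<le> 1 / real (least_denom N) ^ N"
    and "1 / real (least_denom N) ^ Suc N < dnint (\<zeta> * real (least_denom N))"
    and "dnint (\<zeta> * real (least_denom (Suc N))) \<le> 1 / real (least_denom (Suc N)) ^ Suc N"
    unfolding approx_denom_def by auto
qed (use assms in auto)

lemma least_denom_jumps_beyond:
  assumes "N \<ge> 1"
  shows "\<exists>L\<ge>N. least_denom L < least_denom (Suc L)"
proof (rule ccontr)
  assume no_jump: "\<not> ?thesis"
  have const: "least_denom L = least_denom N" if "L \<ge> N" for L
    using that
  proof (induction L rule: dec_induct)
    case (step m)
    have "least_denom m \<le> least_denom (Suc m)"
      using least_denom_le_Suc assms step.hyps(1) by simp
    moreover have "\<not> least_denom m < least_denom (Suc m)"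
      using no_jump step.hyps(1) by blast
    ultimately show ?case
      using step.IH by linarith
  qed simp
  obtain M where M: "M \<ge> 1" "least_denom N < least_denom M"
    using least_denom_unbounded by blast
  show False
  proof (cases "M \<le> N")
    case True
    then show False
      using least_denom_mono[OF M(1) True] M(2) by simp
  next
    case False
    then show False
      using const[of M] M(2) by simp
  qed
qed

lemma phi_exceeds_powers:
  assumes b: "2 \<le> b"
  shows "\<exists>L. n < L \<and> 4 \<le> L \<and> real_of_int (2*b^L + 2*b) \<le> \<phi> (real (Suc L))"
proof -
  obtain N1 where N1: "N1 \<ge> 1" "nat (2*b) < least_denom N1"
    using least_denom_unbounded by blast
  obtain L where L: "L \<ge> N1 + n + 4" "least_denom L < least_denom (Suc L)"
    using least_denom_jumps_beyond[of "N1 + n + 4"] by auto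
  have DL: "real_of_int (2*b) \<le> real (least_denom L)"
    using least_denom_mono[of N1 L] N1 L b by simp
  have "real_of_int (2*b^L + 2*b) \<le> (2/3) * real_of_int (2*b) ^ L"
    using two_power_plus_le b L(1) by simp
  also have "\<dots> \<le> (2/3) * real (least_denom L) ^ L"
    using DL b by (intro mult_left_mono power_mono) auto
  also have "\<dots> \<le> real (least_denom (Suc L))"
    using least_denom_jump L by simp
  also have "\<dots> \<le> \<phi> (real (Suc L))"
    using least_denom_le_phi[of "Suc L"] by simp
  finally have "real_of_int (2*b^L + 2*b) \<le> \<phi> (real (Suc L))" .
  moreover have "n < L" "4 \<le> L"
    using L(1) by auto
  ultimately show ?thesis
    by blast
qed

end


section \<open>A binary tree of rational approximations\<close>

lemma coprime_imp_ex_dvd_mult_add_1: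
  fixes a b :: int
  assumes "coprime a b"
  shows "\<exists>v. b dvd a * v + 1"
proof -
  obtain u w where "u * a + w * b = 1"
    using bezout_int[of a b] assms by auto
  then have "a * (-u) + 1 = b * w"
    by (simp add: algebra_simps)
  then show ?thesis
    by (metis dvd_triv_left)
qed

lemma coprime_if_det_eq_1: "a'*b - a*(b'::int) = 1 \<Longrightarrow> coprime a' b'"
  by (metis coprime_iff_gcd_eq_1 gcd_dvd1 gcd_dvd2 dvd_diff dvd_mult dvd_mult2 is_unit_gcd)

lemma uncountable_UNIV_nat_bool: "uncountable (UNIV :: (nat \<Rightarrow> bool) set)"
proof
  assume "countable (UNIV :: (nat \<Rightarrow> bool) set)"
  then obtain f :: "nat \<Rightarrow> nat \<Rightarrow> bool" where "range f = UNIV"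
    by (metis uncountable_def UNIV_not_empty)
  then obtain n where "(\<lambda>k. \<not> f k k) = f n"
    by (metis UNIV_I rangeE)
  then show False
    by metis
qed

locale Liouville_tree =
  fixes F :: "nat \<Rightarrow> real" and a0 b0 :: int and n0 :: nat
  assumes F_mono: "\<And>N M. 2 \<le> N \<Longrightarrow> N \<le> M \<Longrightarrow> F N \<le> F M"
    and F_exceeds_powers: "\<And>b n. 2 \<le> b \<Longrightarrow> \<exists>L. n < L \<and> 4 \<le> L \<and> real_of_int (2*b^L + 2*b) \<le> F (Suc L)"
    and b0_ge: "2 \<le> b0" and coprime_a0_b0: "coprime a0 b0" and n0_ge: "1 \<le> n0"
    and b0_le_F: "\<And>N. n0 \<le> N \<Longrightarrow> real_of_int b0 \<le> F N"
begin

definition next_level :: "int \<Rightarrow> nat \<Rightarrow> nat" where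
  "next_level b l = (SOME L. l < L \<and> 4 \<le> L \<and> real_of_int (2*b^L + 2*b) \<le> F (Suc L))"

text \<open>The least integer \<open>\<ge> 2b\<^sup>L\<close> that is congruent modulo \<open>b\<close> to a solution \<open>v\<close> of \<open>a v \<equiv> -1\<close>.\<close>
definition child_den :: "int \<Rightarrow> int \<Rightarrow> nat \<Rightarrow> int" where
  "child_den a b l = 2*b^(next_level b l) + ((SOME v. b dvd a * v + 1) - 2*b^(next_level b l)) mod b"

text \<open>
  Nodes are triples (numerator, denominator, level). The denominator of a node of level \<open>l\<close>
  serves the levels in \<open>(l, L]\<close>, where \<open>L\<close> is the level of its children; hence the root
  gets level \<open>n0 - 1\<close>. The two children differ by adding the parent.
\<close>
definition child :: "int \<times> int \<times> nat \<Rightarrow> bool \<Rightarrow> int \<times> int \<times> nat" where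
  "child nd c = (case nd of (a, b, l) \<Rightarrow>
     ((1 + a * (child_den a b l + (if c then b else 0))) div b,
      child_den a b l + (if c then b else 0), next_level b l))"

primrec node :: "(nat \<Rightarrow> bool) \<Rightarrow> nat \<Rightarrow> int \<times> int \<times> nat" where
  "node s 0 = (a0, b0, n0 - 1)"
| "node s (Suc k) = child (node s k) (s k)"

lemma child_props:
  assumes cp: "coprime a b" and b2: "2 \<le> b" and eq: "child (a, b, l) c = (a', b', L)"
  shows "l < L \<and> 4 \<le> L \<and> real_of_int (2*b^L + 2*b) \<le> F (Suc L) \<and> 2*b^L \<le> b' \<and> b' < 2*b^L + 2*b
    \<and> a'*b - a*b' = 1"
proof -
  have L: "L = next_level b l"
    using eq unfolding child_def by simp
  have level: "l < L \<and> 4 \<le> L \<and> real_of_int (2*b^L + 2*b) \<le> F (Suc L)"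
    unfolding L next_level_def using F_exceeds_powers[OF b2, of l] by (rule someI_ex)
  define v where "v = (SOME v. b dvd a * v + 1)"
  have v: "b dvd a * v + 1"
    unfolding v_def using coprime_imp_ex_dvd_mult_add_1[OF cp] by (rule someI_ex)
  define t where "t = (if c then 1 else (0::int))"
  have child_den: "child_den a b l = 2*b^L + (v - 2*b^L) mod b"
    unfolding child_den_def v_def L by simp
  have b': "b' = child_den a b l + b * t"
    using eq unfolding child_def t_def by auto
  have a': "a' = (1 + a * b') div b"
    using eq b' unfolding child_def t_def by (cases c) auto
  have m: "0 \<le> (v - 2*b^L) mod b" "(v - 2*b^L) mod b < b"
    using b2 by auto
  have t: "0 \<le> b * t" "b * t \<le> b"
    using b2 t_def by auto
  have bounds: "2*b^L \<le> b'" "b' < 2*b^L + 2*b"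
    using b' child_den m t by linarith+
  have "b' - v = b * (t - (v - 2*b^L) div b)"
    using b' child_den by (simp add: algebra_simps minus_div_mult_eq_mod[symmetric])
  then have "b dvd (a * v + 1) + a * (b' - v)"
    using v by simp
  then have "b dvd 1 + a*b'"
    by (simp add: algebra_simps)
  then have "a'*b - a*b' = 1"
    using a' by simp
  then show ?thesis
    using level bounds by blast
qed

lemma child_True:
  assumes "b \<noteq> 0"
  shows "child (a, b, l) True =
    (fst (child (a, b, l) False) + a, fst (snd (child (a, b, l) False)) + b, snd (snd (child (a, b, l) False)))"
proof -
  have "(1 + a * (child_den a b l + b)) div b = (1 + a * child_den a b l + a * b) div b"
    by (simp add: algebra_simps)
  also have "\<dots> = (1 + a * child_den a b l) div b + a"
    using assms by simp
  finally have "(1 + a * (child_den a b l + b)) div b = (1 + a * child_den a b l) div b + a" .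
  then show ?thesis
    unfolding child_def by simp
qed

abbreviation num where "num s k \<equiv> fst (node s k)"
abbreviation den where "den s k \<equiv> fst (snd (node s k))"
abbreviation level where "level s k \<equiv> snd (snd (node s k))"

lemma node_Suc_eq: "child (num s k, den s k, level s k) (s k) = (num s (Suc k), den s (Suc k), level s (Suc k))"
  by simp

lemma node_invariant:
  "coprime (num s k) (den s k) \<and> 2 \<le> den s k \<and> (\<forall>N>level s k. real_of_int (den s k) \<le> F N)"
proof (induction k)
  case 0
  show ?case
    using coprime_a0_b0 b0_ge b0_le_F n0_ge by auto
next
  case (Suc k)
  have b2: "2 \<le> den s k"
    using Suc.IH by blast
  note props = child_props[OF conjunct1[OF Suc.IH] b2 node_Suc_eq]
  have lo: "2 * den s k ^ level s (Suc k) \<le> den s (Suc k)"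
    and hi: "den s (Suc k) < 2 * den s k ^ level s (Suc k) + 2 * den s k"
    and room: "real_of_int (2 * den s k ^ level s (Suc k) + 2 * den s k) \<le> F (Suc (level s (Suc k)))"
    and lev: "4 \<le> level s (Suc k)"
    using props by auto
  have "1 \<le> den s k ^ level s (Suc k)"
    using b2 by simp
  then have b2': "2 \<le> den s (Suc k)"
    using lo by linarith
  have "real_of_int (den s (Suc k)) \<le> F (Suc (level s (Suc k)))"
    using hi room by (smt (verit) of_int_le_iff)
  moreover have "F (Suc (level s (Suc k))) \<le> F N" if "level s (Suc k) < N" for N
    using lev that by (intro F_mono) auto
  ultimately have "\<forall>N>level s (Suc k). real_of_int (den s (Suc k)) \<le> F N"
    by force
  then show ?case
    using props coprime_if_det_eq_1 b2' by blast
qed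

lemma node_Suc:
  "level s k < level s (Suc k) \<and> 4 \<le> level s (Suc k) \<and> 2 * den s k ^ level s (Suc k) \<le> den s (Suc k)
    \<and> num s (Suc k) * den s k - num s k * den s (Suc k) = 1"
  using child_props[OF _ _ node_Suc_eq] node_invariant[of s k] by blast

lemma den_Suc_ge: "16 * den s k \<le> den s (Suc k)"
proof -
  have s: "4 \<le> level s (Suc k)" "2 * den s k ^ level s (Suc k) \<le> den s (Suc k)"
    using node_Suc by auto
  have b2: "2 \<le> den s k"
    using node_invariant by blast
  have "den s k ^ 4 \<le> den s k ^ level s (Suc k)"
    using s b2 by (intro power_increasing) auto
  moreover have "8 * den s k \<le> den s k ^ 4"
  proof -
    have "(8::int) \<le> den s k ^ 3"
      using power_mono[of 2 "den s k" 3] b2 by simp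
    then have "8 * den s k \<le> den s k ^ 3 * den s k"
      using b2 by (intro mult_right_mono) auto
    then show ?thesis
      by (simp add: power_Suc2[symmetric] del: power_Suc)
  qed
  ultimately show ?thesis
    using s by linarith
qed

lemma den_ge_two: "(2::real) \<le> real_of_int (den s k)"
  using node_invariant[of s k] by simp

definition approximant :: "(nat \<Rightarrow> bool) \<Rightarrow> nat \<Rightarrow> real" where
  "approximant s k = real_of_int (num s k) / real_of_int (den s k)"

definition gap :: "(nat \<Rightarrow> bool) \<Rightarrow> nat \<Rightarrow> real" where
  "gap s k = 1 / (real_of_int (den s k) * real_of_int (den s (Suc k)))"

lemma approximant_Suc: "approximant s (Suc k) = approximant s k + gap s k"
proof -
  have "real_of_int (num s (Suc k)) * real_of_int (den s k)
      - real_of_int (num s k) * real_of_int (den s (Suc k)) = 1"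
    using node_Suc by (metis of_int_1 of_int_diff of_int_mult)
  moreover have "real_of_int (den s k) \<noteq> 0" "real_of_int (den s (Suc k)) \<noteq> 0"
    using den_ge_two[of s k] den_ge_two[of s "Suc k"] by auto
  ultimately show ?thesis
    unfolding approximant_def gap_def by (simp add: field_simps)
qed

lemma gap_pos: "0 < gap s k"
  unfolding gap_def using den_ge_two[of s k] den_ge_two[of s "Suc k"] by simp

lemma gap_Suc_le: "16 * gap s (Suc k) \<le> gap s k"
proof -
  define b where "b = real_of_int (den s k)"
  define b' where "b' = real_of_int (den s (Suc k))"
  define b'' where "b'' = real_of_int (den s (Suc (Suc k)))"
  have p: "0 < b" "0 < b'"
    unfolding b_def b'_def using den_ge_two[of s k] den_ge_two[of s "Suc k"] by auto
  have "16 * b' \<le> b''"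
    unfolding b'_def b''_def using den_Suc_ge[of s "Suc k"] by (metis of_int_le_iff of_int_mult of_int_numeral)
  moreover have "b \<le> b'"
    unfolding b_def b'_def using den_Suc_ge[of s k] node_invariant[of s k] by simp
  ultimately have "16 * b \<le> b''"
    by linarith
  then have "b' * (16 * b) \<le> b' * b''"
    using p by (intro mult_left_mono) auto
  then have "16 / (b' * b'') \<le> 16 / (b' * (16 * b))"
    using p by (intro divide_left_mono) auto
  also have "\<dots> = 1 / (b * b')"
    using p by simp
  finally show ?thesis
    unfolding gap_def b_def b'_def b''_def by simp
qed

lemma approximant_incseq: "incseq (approximant s)"
  by (rule incseq_SucI) (simp add: approximant_Suc less_imp_le gap_pos)

lemma upper_bound_decseq: "decseq (\<lambda>k. approximant s k + 2 * gap s k)"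
proof (rule decseq_SucI)
  fix k
  show "approximant s (Suc k) + 2 * gap s (Suc k) \<le> approximant s k + 2 * gap s k"
    using approximant_Suc[of s k] gap_Suc_le[of s k] gap_pos[of s "Suc k"] by simp
qed

lemma approximant_le_upper: "approximant s k \<le> approximant s j + 2 * gap s j"
proof (cases "k \<le> j")
  case True
  then have "approximant s k \<le> approximant s j"
    using approximant_incseq by (simp add: incseq_def)
  then show ?thesis
    using gap_pos[of s j] by simp
next
  case False
  then have "approximant s k + 2 * gap s k \<le> approximant s j + 2 * gap s j"
    using upper_bound_decseq[of s] by (simp add: decseq_def)
  then show ?thesis
    using gap_pos[of s k] by simp
qed

definition tree_limit :: "(nat \<Rightarrow> bool) \<Rightarrow> real" where
  "tree_limit s = lim (approximant s)"

lemma approximant_tendsto: "approximant s \<longlonglongrightarrow> tree_limit s"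
proof -
  obtain L where "approximant s \<longlonglongrightarrow> L"
    using incseq_convergent[OF approximant_incseq, of s "approximant s 0 + 2 * gap s 0"] approximant_le_upper
    by metis
  then show ?thesis
    unfolding tree_limit_def by (simp add: limI)
qed

lemma tree_limit_gt: "approximant s k < tree_limit s"
proof -
  have "approximant s (Suc k) \<le> tree_limit s"
    using incseq_le[OF approximant_incseq approximant_tendsto] by blast
  then show ?thesis
    using approximant_Suc[of s k] gap_pos[of s k] by simp
qed

lemma tree_limit_le: "tree_limit s \<le> approximant s k + 2 * gap s k"
  by (rule LIMSEQ_le_const2[OF approximant_tendsto]) (use approximant_le_upper in blast)

lemma den_tree_limit_minus_num:
  fixes s :: "nat \<Rightarrow> bool" and k :: nat
  defines "b \<equiv> real_of_int (den s k)"
  shows "0 < tree_limit s * b - real_of_int (num s k)"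
    and "tree_limit s * b - real_of_int (num s k) \<le> 1 / b ^ level s (Suc k)"
proof -
  define b' where "b' = real_of_int (den s (Suc k))"
  define L where "L = level s (Suc k)"
  have b2: "2 \<le> b"
    using den_ge_two b_def by simp
  have bb': "2 * b ^ L \<le> b'"
    using node_Suc[of s k] unfolding b_def b'_def L_def
    by (metis of_int_le_iff of_int_mult of_int_numeral of_int_power)
  have y_eq: "tree_limit s * b - real_of_int (num s k) = b * (tree_limit s - approximant s k)"
    unfolding approximant_def using b2 b_def by (simp add: field_simps)
  then show "0 < tree_limit s * b - real_of_int (num s k)"
    using tree_limit_gt[of s k] b2 by simp
  have "b * (tree_limit s - approximant s k) \<le> b * (2 * gap s k)"
    using tree_limit_le[of s k] b2 by simp
  also have "\<dots> = 2 / b'"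
    unfolding gap_def b_def b'_def using b2 b_def by (simp add: field_simps)
  also have "\<dots> \<le> 2 / (2 * b ^ L)"
  proof -
    have "0 < b ^ L"
      using b2 by simp
    then show ?thesis
      using bb' by (intro divide_left_mono mult_pos_pos) auto
  qed
  finally show "tree_limit s * b - real_of_int (num s k) \<le> 1 / b ^ level s (Suc k)"
    unfolding y_eq L_def by simp
qed

lemma good_denom_den:
  assumes "level s k < N" "N \<le> level s (Suc k)"
  shows "good_denom (tree_limit s) N (den s k) \<and> real_of_int (den s k) \<le> F N"
proof -
  define b where "b = real_of_int (den s k)"
  define y where "y = tree_limit s * b - real_of_int (num s k)"
  have b2: "2 \<le> b"
    using den_ge_two b_def by simp
  have ypos: "0 < y"
    using den_tree_limit_minus_num(1) unfolding y_def b_def .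
  have "y \<le> 1 / b ^ level s (Suc k)"
    using den_tree_limit_minus_num(2) unfolding y_def b_def .
  also have "\<dots> \<le> 1 / b ^ N"
    using b2 assms(2) by (simp add: divide_left_mono power_increasing)
  finally have y_le: "y \<le> 1 / b ^ N" .
  have "1 < b ^ N"
    using b2 assms(1) by (intro one_less_power) auto
  then have "y < 1"
    using y_le by (simp add: le_less_trans)
  have "tree_limit s * b \<notin> \<int>"
  proof
    assume "tree_limit s * b \<in> \<int>"
    then have "y \<in> \<int>"
      unfolding y_def by simp
    then obtain m where "y = of_int m"
      by (auto elim: Ints_cases)
    then show False
      using ypos \<open>y < 1\<close> by simp
  qed
  then have "0 < dnint (tree_limit s * b)"
    using dnint_pos_iff by simp
  moreover have "dnint (tree_limit s * b) \<le> 1 / b ^ N"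
  proof -
    have "dnint (tree_limit s * b) \<le> y"
      using dnint_le[of "tree_limit s * b" "num s k"] ypos unfolding y_def by simp
    then show ?thesis
      using y_le by linarith
  qed
  moreover have "2 \<le> den s k" "real_of_int (den s k) \<le> F N"
    using node_invariant assms(1) by blast+
  ultimately show ?thesis
    unfolding good_denom_def b_def by blast
qed

lemma level_ge: "k \<le> level s k"
proof (induction k)
  case (Suc k)
  then show ?case
    using node_Suc[of s k] by simp
qed simp

lemma level_between:
  assumes "n0 \<le> N"
  obtains k where "level s k < N" "N \<le> level s (Suc k)"
proof -
  have ex: "\<exists>k. N \<le> level s (Suc k)"
    using level_ge[of "Suc N" s] by (intro exI[of _ N]) simp
  define k where "k = (LEAST k. N \<le> level s (Suc k))"
  have "N \<le> level s (Suc k)"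
    unfolding k_def using ex by (rule LeastI_ex)
  moreover have "level s k < N"
  proof (cases k)
    case 0
    then show ?thesis
      using assms n0_ge by simp
  next
    case (Suc j)
    then have "\<not> N \<le> level s (Suc j)"
      unfolding k_def using not_less_Least[of j] by (metis lessI)
    then show ?thesis
      using Suc by simp
  qed
  ultimately show ?thesis
    using that by blast
qed

lemma tree_limit_good:
  assumes "n0 \<le> N"
  shows "\<exists>q. good_denom (tree_limit s) N q \<and> real_of_int q \<le> F N"
proof -
  obtain k where "level s k < N" "N \<le> level s (Suc k)"
    using level_between[OF assms] .
  then show ?thesis
    using good_denom_den by blast
qed

lemma tree_limit_near_root: "\<bar>tree_limit s - real_of_int a0 / real_of_int b0\<bar> \<le> 1 / 2 ^ n0"
proof -
  define b where "b = real_of_int b0"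
  define y where "y = tree_limit s * b - real_of_int a0"
  have b2: "2 \<le> b"
    using b0_ge b_def by simp
  have "n0 - 1 < level s 1"
    using node_Suc[of s 0] by simp
  then have Ln: "n0 \<le> level s 1"
    using n0_ge by linarith
  have ypos: "0 < y"
    using den_tree_limit_minus_num(1)[of s 0] unfolding y_def b_def by simp
  have "y \<le> 1 / b ^ level s 1"
    using den_tree_limit_minus_num(2)[of s 0] unfolding y_def b_def by simp
  also have "\<dots> \<le> 1 / 2 ^ n0"
    using b2 Ln by (intro divide_left_mono order_trans[OF power_increasing power_mono]) auto
  finally have "y \<le> 1 / 2 ^ n0" .
  moreover have "tree_limit s - real_of_int a0 / real_of_int b0 = y / b"
    unfolding y_def b_def using b2 b_def by (simp add: field_simps)
  moreover have "y / b \<le> y"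
    using ypos b2 by (simp add: divide_le_eq)
  ultimately show ?thesis
    using ypos b2 by simp
qed

text \<open>
  Once two branches separate at node \<open>a/b\<close>, with children \<open>a'/b'\<close> and \<open>(a'+a)/(b'+b)\<close>,
  the limit below the second child stays within \<open>2/((b'+b) b'')\<close> of it, which is less than
  the distance \<open>1/(b'(b'+b))\<close> between the two children since \<open>b'' \<ge> 16(b'+b)\<close>.
\<close>
lemma tree_limit_less:
  assumes eq: "node s k = node s' k" and sk: "\<not> s k" and s'k: "s' k"
  shows "tree_limit s' < tree_limit s"
proof -
  obtain a b l where nd: "node s k = (a, b, l)" "node s' k = (a, b, l)"
    using eq by (metis prod.exhaust)
  have b2: "2 \<le> b"
    using node_invariant[of s k] nd by simp
  have "node s (Suc k) = child (a, b, l) False" "node s' (Suc k) = child (a, b, l) True"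
    using nd sk s'k by simp_all
  then have A2: "num s' (Suc k) = num s (Suc k) + a" and B2: "den s' (Suc k) = den s (Suc k) + b"
    using child_True[of b a l] b2 by auto
  define a' where "a' = real_of_int (num s (Suc k))"
  define b' where "b' = real_of_int (den s (Suc k))"
  define ra where "ra = real_of_int a"
  define rb where "rb = real_of_int b"
  define b'' where "b'' = real_of_int (den s' (Suc (Suc k)))"
  have "num s (Suc k) * b - a * den s (Suc k) = 1"
    using node_Suc[of s k] nd by simp
  then have det: "a' * rb - ra * b' = 1"
    unfolding a'_def b'_def ra_def rb_def by (metis of_int_1 of_int_diff of_int_mult)
  have rb2: "2 \<le> rb" and b'2: "2 \<le> b'"
    using b2 den_ge_two[of s "Suc k"] unfolding rb_def b'_def by auto
  have g: "16 * (b' + rb) \<le> b''"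
    using den_Suc_ge[of s' "Suc k"] B2 unfolding b''_def b'_def rb_def
    by (metis of_int_add of_int_le_iff of_int_mult of_int_numeral)
  have lower: "a' / b' < tree_limit s"
    using tree_limit_gt[of s "Suc k"] unfolding approximant_def a'_def b'_def by simp
  have upper: "tree_limit s' \<le> (a' + ra) / (b' + rb) + 2 / ((b' + rb) * b'')"
    using tree_limit_le[of s' "Suc k"] unfolding approximant_def gap_def A2 B2 a'_def b'_def ra_def rb_def b''_def
    by simp
  have "a' / b' - (a' + ra) / (b' + rb) = (a' * rb - ra * b') / (b' * (b' + rb))"
    using rb2 b'2 by (simp add: field_simps)
  then have diff: "a' / b' - (a' + ra) / (b' + rb) = 1 / (b' * (b' + rb))"
    using det by simp
  have "2 / b'' < 1 / b'"
    using g rb2 b'2 by (simp add: field_simps)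
  then have "2 / ((b' + rb) * b'') < 1 / (b' * (b' + rb))"
    using rb2 b'2 divide_strict_right_mono[of "2 / b''" "1 / b'" "b' + rb"] by (simp add: mult.commute)
  then show ?thesis
    using lower upper diff by linarith
qed

lemma tree_limit_inj: "inj tree_limit"
proof (rule injI, rule ccontr)
  fix s s'
  assume eq: "tree_limit s = tree_limit s'" and "s \<noteq> s'"
  then have "\<exists>k. s k \<noteq> s' k"
    by auto
  define k where "k = (LEAST k. s k \<noteq> s' k)"
  have differ: "s k \<noteq> s' k"
    unfolding k_def using \<open>\<exists>k. s k \<noteq> s' k\<close> by (rule LeastI_ex)
  have agree: "s i = s' i" if "i < k" for i
    using that unfolding k_def using not_less_Least by blast
  have "node s i = node s' i" if "i \<le> k" for i
    using that
  proof (induction i)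
    case (Suc i)
    then show ?case
      using agree[of i] by simp
  qed simp
  then have "node s k = node s' k"
    by simp
  then show False
    using tree_limit_less[of s k s'] tree_limit_less[of s' k s] differ eq by (cases "s k") auto
qed

lemma uncountable_good_near_root:
  "uncountable {y. (\<forall>N\<ge>n0. \<exists>q. good_denom y N q \<and> real_of_int q \<le> F N)
     \<and> \<bar>y - real_of_int a0 / real_of_int b0\<bar> \<le> 1 / 2 ^ n0}"
  (is "uncountable ?S")
proof
  assume "countable ?S"
  moreover have "range tree_limit \<subseteq> ?S"
    using tree_limit_good tree_limit_near_root by blast
  ultimately have "countable (UNIV :: (nat \<Rightarrow> bool) set)"
    using countable_image_inj_on[OF _ tree_limit_inj] countable_subset by blast
  then show False
    using uncountable_UNIV_nat_bool by blast
qed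

end

section \<open>Uncountability\<close>

lemma coprime_fraction_near:
  fixes c \<delta> :: real
  assumes "\<delta> > 0"
  obtains a b :: int where "2 \<le> b" "coprime a b" "\<bar>c - real_of_int a / real_of_int b\<bar> < \<delta>"
proof -
  obtain m where m: "(1/2::real) ^ m < \<delta>"
    using real_arch_pow_inv[OF assms, of "1/2"] by auto
  define K :: int where "K = 2 ^ m"
  define t where "t = \<lfloor>c * real_of_int K\<rfloor>"
  have K: "(1::real) \<le> real_of_int K" "1 / real_of_int K < \<delta>"
    using m unfolding K_def by (simp_all add: power_one_over)
  have "2 \<le> 2 * K" "coprime (2 * t + 1) (2 * K)"
    unfolding K_def by simp_all
  moreover have "\<bar>c - real_of_int (2 * t + 1) / real_of_int (2 * K)\<bar> < \<delta>"
  proof -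
    have "real_of_int (2 * t + 1) / real_of_int (2 * K) = (real_of_int t + 1/2) / real_of_int K"
      using K by (simp add: field_simps)
    then have "c - real_of_int (2 * t + 1) / real_of_int (2 * K)
        = (c * real_of_int K - (real_of_int t + 1/2)) / real_of_int K"
      using K by (simp add: field_simps)
    moreover have "\<bar>c * real_of_int K - (real_of_int t + 1/2)\<bar> \<le> 1"
      unfolding t_def by linarith
    ultimately have "\<bar>c - real_of_int (2 * t + 1) / real_of_int (2 * K)\<bar> \<le> 1 / real_of_int K"
      using K by (simp add: abs_divide divide_right_mono)
    then show ?thesis
      using K by linarith
  qed
  ultimately show ?thesis
    using that by blast
qed

lemma PhiClass_obtain_level:
  fixes \<epsilon> :: real and b :: int
  assumes "\<phi> \<in> PhiClass" "0 < \<epsilon>"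
  obtains n0 where "1 \<le> n0" "1 / 2 ^ n0 < \<epsilon>" "\<And>N. n0 \<le> N \<Longrightarrow> real_of_int b \<le> \<phi> (real N)"
proof -
  have phi_top: "filterlim \<phi> at_top at_top"
    using assms(1) unfolding PhiClass_def by blast
  have "\<forall>\<^sub>F N in sequentially. real_of_int b \<le> \<phi> (real N)"
    using filterlim_compose[OF phi_top filterlim_real_sequentially] unfolding filterlim_at_top comp_def by blast
  moreover have "\<forall>\<^sub>F N in sequentially. (1/2::real) ^ N < \<epsilon>"
    using assms(2) by (intro order_tendstoD(2)[OF LIMSEQ_power_zero]) auto
  moreover have "\<forall>\<^sub>F N in sequentially. 1 \<le> N"
    by (rule eventually_ge_at_top)
  ultimately have "\<forall>\<^sub>F N in sequentially. real_of_int b \<le> \<phi> (real N) \<and> (1/2::real) ^ N < \<epsilon> \<and> 1 \<le> N"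
    by eventually_elim blast
  then obtain n0 where n0: "\<And>N. n0 \<le> N \<Longrightarrow> real_of_int b \<le> \<phi> (real N) \<and> (1/2::real) ^ N < \<epsilon> \<and> 1 \<le> N"
    unfolding eventually_sequentially by blast
  moreover have "1 / 2 ^ n0 < \<epsilon>"
    using n0[of n0] by (simp add: power_one_over)
  ultimately show ?thesis
    using that by blast
qed

lemma Liouville_tree_phi:
  assumes "\<phi> \<in> PhiClass" "\<zeta> \<in> L_phi \<phi>"
    and "2 \<le> b0" "coprime a0 b0" "1 \<le> n0" "\<And>N. n0 \<le> N \<Longrightarrow> real_of_int b0 \<le> \<phi> (real N)"
  shows "Liouville_tree (\<lambda>N. \<phi> (real N)) a0 b0 n0"
proof -
  interpret L_phi_witness \<zeta> \<phi>
    using assms(2) by unfold_locales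
  have mono: "mono_on {2..} \<phi>"
    using assms(1) unfolding PhiClass_def by blast
  show ?thesis
  proof
    fix N M :: nat
    assume "2 \<le> N" "N \<le> M"
    then show "\<phi> (real N) \<le> \<phi> (real M)"
      by (intro mono_onD[OF mono]) auto
  next
    fix b :: int and n :: nat
    assume "2 \<le> b"
    then show "\<exists>L. n < L \<and> 4 \<le> L \<and> real_of_int (2*b^L + 2*b) \<le> \<phi> (real (Suc L))"
      by (rule phi_exceeds_powers)
  qed (use assms(3-) in auto)
qed

lemma uncountable_L_phi:
  assumes "\<phi> \<in> PhiClass" "\<zeta> \<in> L_phi \<phi>"
  shows "uncountable (L_phi \<phi>)"
proof -
  interpret L_phi_witness \<zeta> \<phi>
    using assms(2) by unfold_locales
  have "Liouville_tree (\<lambda>N. \<phi> (real N)) 1 2 1"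
    using assms phi_ge_two by (intro Liouville_tree_phi) auto
  then have "uncountable {y. (\<forall>N\<ge>1. \<exists>q. good_denom y N q \<and> real_of_int q \<le> \<phi> (real N))
      \<and> \<bar>y - real_of_int 1 / real_of_int 2\<bar> \<le> 1 / 2 ^ 1}" (is "uncountable ?S")
    by (rule Liouville_tree.uncountable_good_near_root)
  moreover have "?S \<subseteq> L_phi \<phi>"
    using in_L_phi_if_good_denoms by blast
  ultimately show ?thesis
    using countable_subset by blast
qed

lemma uncountable_L_phi_star_inter_ball:
  assumes "\<phi> \<in> PhiClass" "\<zeta> \<in> L_phi \<phi>" "0 < \<delta>"
  shows "uncountable (L_phi_star \<phi> \<inter> ball c \<delta>)"
proof -
  have "\<delta>/2 > 0"
    using assms(3) by simp
  then obtain a0 b0 where ab: "2 \<le> b0" "coprime a0 b0" "\<bar>c - real_of_int a0 / real_of_int b0\<bar> < \<delta>/2"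
    by (rule coprime_fraction_near)
  obtain n0 where n0: "1 \<le> n0" "1 / 2 ^ n0 < \<delta>/2" "\<And>N. n0 \<le> N \<Longrightarrow> real_of_int b0 \<le> \<phi> (real N)"
    using PhiClass_obtain_level[OF assms(1) \<open>\<delta>/2 > 0\<close>, of b0] by blast
  have "Liouville_tree (\<lambda>N. \<phi> (real N)) a0 b0 n0"
    using assms ab n0 by (intro Liouville_tree_phi) auto
  then have "uncountable {y. (\<forall>N\<ge>n0. \<exists>q. good_denom y N q \<and> real_of_int q \<le> \<phi> (real N))
      \<and> \<bar>y - real_of_int a0 / real_of_int b0\<bar> \<le> 1 / 2 ^ n0}" (is "uncountable ?S")
    by (rule Liouville_tree.uncountable_good_near_root)
  moreover have "?S \<subseteq> L_phi_star \<phi> \<inter> ball c \<delta>"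
  proof
    fix y
    assume y: "y \<in> ?S"
    then have "\<bar>y - real_of_int a0 / real_of_int b0\<bar> \<le> 1 / 2 ^ n0"
      by blast
    then have "\<bar>y - c\<bar> < \<delta>"
      using ab(3) n0(2) by linarith
    then have "y \<in> ball c \<delta>"
      by (simp add: dist_real_def abs_minus_commute)
    moreover have "y \<in> L_phi_star \<phi>"
      using y in_L_phi_star_if_good_denoms by blast
    ultimately show "y \<in> L_phi_star \<phi> \<inter> ball c \<delta>"
      by blast
  qed
  ultimately show ?thesis
    using countable_subset by blast
qed

theorem proposition3p6:
  fixes \<phi> :: "real \<Rightarrow> real"
  assumes "\<phi> \<in> PhiClass"
    and "L_phi \<phi> \<noteq> {}"
  shows "uncountable (L_phi \<phi>) \<and>
         (\<forall>J :: real set. is_interval J \<and> open J \<and> J \<noteq> {} \<longrightarrow> uncountable (L_phi_star \<phi> \<inter> J))"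
proof -
  obtain \<zeta> where \<zeta>: "\<zeta> \<in> L_phi \<phi>"
    using assms(2) by blast
  have "uncountable (L_phi_star \<phi> \<inter> J)" if J: "open J" "J \<noteq> {}" for J
  proof -
    obtain c where "c \<in> J"
      using J(2) by blast
    then obtain \<delta> where \<delta>: "\<delta> > 0" "ball c \<delta> \<subseteq> J"
      using J(1) open_contains_ball by blast
    have "uncountable (L_phi_star \<phi> \<inter> ball c \<delta>)"
      by (rule uncountable_L_phi_star_inter_ball[OF assms(1) \<zeta> \<delta>(1)])
    moreover have "L_phi_star \<phi> \<inter> ball c \<delta> \<subseteq> L_phi_star \<phi> \<inter> J"
      using \<delta>(2) by blast
    ultimately show ?thesis
      using countable_subset by blast
  qed
  then show ?thesis
    using uncountable_L_phi[OF assms(1) \<zeta>] by blast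
qed

end
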